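(* There exist continuous increasing convex functions $\Phi:[1,\infty)\to[1,\infty)$ such that $$\int_1^\infty\log\Phi(t)\,\frac{dt}{t^2}=\infty,\qquad \liminf_{t\to\infty}\frac{\log\Phi(t)}{\log t}=1,$$ and $\Phi(t)\ge t$ for all $t\in[1,\infty)$. *)

theory Defs
  imports "HOL-Analysis.Analysis"
begin

end

theory Submission
  imports Defs
begin

text \<open>
  Take knots \<open>s\<^sub>0 = 2\<close>, \<open>s\<^sub>k\<^sub>+\<^sub>1 = exp (s\<^sub>k\<^sup>2)\<close> and let \<open>\<Phi>\<close> be \<open>t\<close> plus ramps of slope \<open>exp s\<^sub>k\<close> starting at \<open>s\<^sub>k\<close>;
  as a sum of convex increasing pieces, \<open>\<Phi>\<close> is convex, strictly increasing and \<open>\<ge> t\<close>.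
  On \<open>[2 s\<^sub>k, 4 s\<^sub>k]\<close> the \<open>k\<close>-th ramp gives \<open>log \<Phi> \<ge> s\<^sub>k\<close>, so each of these disjoint blocks contributes
  at least \<open>1/8\<close> to \<open>\<integral> log \<Phi>(t) dt/t\<^sup>2\<close>, which therefore diverges. At \<open>t = s\<^sub>k\<^sub>+\<^sub>1\<close> only the first \<open>k+1\<close>
  ramps are active, so \<open>log \<Phi>(t) \<le> s\<^sub>k\<^sup>2 + 2 s\<^sub>k = log t + 2 s\<^sub>k\<close>, and the knots grow so fast that
  \<open>s\<^sub>k / log s\<^sub>k\<^sub>+\<^sub>1 \<rightarrow> 0\<close>; since \<open>\<Phi>(t) \<ge> t\<close>, the liminf is exactly 1.
\<close>

lemma convex_on_max:
  assumes "convex_on S f" "convex_on S g"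
  shows "convex_on S (\<lambda>x. max (f x) (g x))"
  unfolding convex_on_def
proof (intro conjI ballI allI impI)
  show "convex S" using assms(1) by (rule convex_on_imp_convex)
next
  fix x y and u v :: real assume xy: "x \<in> S" "y \<in> S" and uv: "0 \<le> u" "0 \<le> v" "u + v = 1"
  have "f (u *\<^sub>R x + v *\<^sub>R y) \<le> u * f x + v * f y" "g (u *\<^sub>R x + v *\<^sub>R y) \<le> u * g x + v * g y"
    using assms xy uv by (auto simp: convex_on_def)
  moreover have "u * f x + v * f y \<le> u * max (f x) (g x) + v * max (f y) (g y)"
    "u * g x + v * g y \<le> u * max (f x) (g x) + v * max (f y) (g y)"
    using uv by (intro add_mono mult_left_mono; simp)+
  ultimately show "max (f (u *\<^sub>R x + v *\<^sub>R y)) (g (u *\<^sub>R x + v *\<^sub>R y))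
      \<le> u * max (f x) (g x) + v * max (f y) (g y)" by linarith
qed

lemma convex_on_sum_fun:
  assumes "convex S" "\<And>i. i \<in> I \<Longrightarrow> convex_on S (f i)"
  shows "convex_on S (\<lambda>x. \<Sum>i\<in>I. f i x)"
  using assms(2)
proof (induction I rule: infinite_finite_induct)
  case (insert i I)
  then show ?case by (simp add: convex_on_add)
qed (simp_all add: convex_on_const assms(1))

lemma Liminf_antimono_filter:
  assumes "F \<le> G"
  shows "Liminf G f \<le> Liminf F f"
  unfolding Liminf_def using assms by (intro SUP_subset_mono) (auto simp: le_filter_def)

lemma Liminf_at_top_le_Liminf_sequence:
  assumes "filterlim x at_top sequentially"
  shows "Liminf at_top g \<le> Liminf sequentially (\<lambda>k. g (x k))"
proof -
  have "Liminf at_top g \<le> Liminf (filtermap x sequentially) g"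
    using assms by (intro Liminf_antimono_filter) (simp add: filterlim_def)
  also have "\<dots> \<le> Liminf sequentially (\<lambda>k. g (x k))" by (rule Liminf_filtermap_le)
  finally show ?thesis .
qed

lemma nn_integral_ge_suminf_disjoint:
  fixes f :: "'a \<Rightarrow> ennreal" and c :: "nat \<Rightarrow> ennreal"
  assumes "disjoint_family A" "\<And>k. A k \<in> sets M" "\<And>k x. x \<in> A k \<Longrightarrow> c k \<le> f x"
  shows "(\<Sum>k. c k * emeasure M (A k)) \<le> (\<integral>\<^sup>+x. f x \<partial>M)"
proof -
  have "(\<Sum>k. c k * emeasure M (A k)) = (\<integral>\<^sup>+x. (\<Sum>k. c k * indicator (A k) x) \<partial>M)"
    using assms(2) by (simp add: nn_integral_suminf nn_integral_cmult_indicator)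
  also have "\<dots> \<le> (\<integral>\<^sup>+x. f x \<partial>M)"
  proof (rule nn_integral_mono)
    fix x
    show "(\<Sum>k. c k * indicator (A k) x) \<le> f x"
    proof (cases "x \<in> (\<Union>k. A k)")
      case True
      then obtain k where "x \<in> A k" by blast
      then show ?thesis using suminf_cmult_indicator[OF assms(1)] assms(3) by simp
    qed (simp add: indicator_def)
  qed
  finally show ?thesis .
qed

lemma suminf_ennreal_const_eq_top:
  assumes "0 < c"
  shows "(\<Sum>k::nat. ennreal c) = \<infinity>"
proof -
  have "\<not> summable (\<lambda>_::nat. c)"
  proof
    assume "summable (\<lambda>_::nat. c)"
    then have "(\<lambda>_::nat. c) \<longlonglongrightarrow> 0" by (rule summable_LIMSEQ_zero)
    then show False using assms by (simp add: LIMSEQ_const_iff)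
  qed
  then have "(\<Sum>k::nat. ennreal c) = top"
    by (rule summable_iff_suminf_neq_top[of "\<lambda>_. c", rotated]) (use assms in simp)
  then show ?thesis by simp
qed

fun knot :: "nat \<Rightarrow> real" where
  "knot 0 = 2"
| "knot (Suc k) = exp (knot k ^ 2)"

definition Phi_trunc :: "nat \<Rightarrow> real \<Rightarrow> real" where
  "Phi_trunc N t = t + (\<Sum>j<N. exp (knot j) * max 0 (t - knot j))"

text \<open>Only ramps with \<open>knot j < t\<close> are nonzero at \<open>t\<close>, and these have \<open>j < \<lceil>t\<rceil>\<close> because \<open>knot j \<ge> j + 2\<close>.\<close>
definition Phi :: "real \<Rightarrow> real" where
  "Phi t = Phi_trunc (nat \<lceil>t\<rceil>) t"

lemma knot_ge: "real k + 2 \<le> knot k"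
proof (induction k)
  case (Suc k)
  have "2 * knot k \<le> knot k * knot k" using Suc by (intro mult_right_mono) auto
  then have "knot k + 1 \<le> knot k * knot k" using Suc by linarith
  also have "\<dots> \<le> exp (knot k ^ 2)"
    unfolding power2_eq_square using exp_ge_add_one_self[of "knot k * knot k"] by linarith
  finally show ?case using Suc by simp
qed simp

lemma knot_Suc_gt_double: "2 * knot k < knot (Suc k)"
proof -
  have k2: "2 \<le> knot k" using knot_ge[of k] by simp
  have "(1 + knot k) * (1 + knot k) \<le> exp (knot k) * exp (knot k)"
    using k2 by (intro mult_mono exp_ge_add_one_self) auto
  also have "\<dots> = exp (2 * knot k)" by (simp add: mult_exp_exp)
  also have "\<dots> \<le> exp (knot k ^ 2)"
    using k2 mult_right_mono[of 2 "knot k" "knot k"] by (simp add: power2_eq_square)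
  finally have "(1 + knot k) * (1 + knot k) \<le> knot (Suc k)" by simp
  moreover have "(1 + knot k) * (1 + knot k) = 1 + 2 * knot k + knot k * knot k"
    by (simp add: algebra_simps)
  ultimately show ?thesis using zero_le_square[of "knot k"] by linarith
qed

lemma strict_mono_knot: "strict_mono knot"
proof (rule strict_monoI_Suc)
  fix k show "knot k < knot (Suc k)" using knot_Suc_gt_double[of k] knot_ge[of k] by linarith
qed

lemma knot_le_iff [simp]: "knot i \<le> knot j \<longleftrightarrow> i \<le> j"
  using strict_mono_knot by (rule strict_mono_less_eq)

lemma le_knot_ceiling: "t \<le> knot (nat \<lceil>t\<rceil>)"
  using knot_ge[of "nat \<lceil>t\<rceil>"] by linarith

lemma Phi_trunc_stable:
  assumes "t \<le> knot M" "M \<le> N"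
  shows "Phi_trunc N t = Phi_trunc M t"
proof -
  have split: "{..<N} = {..<M} \<union> {M..<N}" using assms(2) by auto
  have "(\<Sum>j<N. exp (knot j) * max 0 (t - knot j))
      = (\<Sum>j<M. exp (knot j) * max 0 (t - knot j)) + (\<Sum>j\<in>{M..<N}. exp (knot j) * max 0 (t - knot j))"
    unfolding split by (rule sum.union_disjoint) auto
  moreover have "(\<Sum>j\<in>{M..<N}. exp (knot j) * max 0 (t - knot j)) = 0"
  proof (rule sum.neutral, rule ballI)
    fix j assume "j \<in> {M..<N}"
    then have "knot M \<le> knot j" by simp
    then have "t \<le> knot j" using assms(1) by linarith
    then show "exp (knot j) * max 0 (t - knot j) = 0" by simp
  qed
  ultimately show ?thesis unfolding Phi_trunc_def by simp
qed

lemma Phi_eq_Phi_trunc: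
  assumes "t \<le> knot N"
  shows "Phi t = Phi_trunc N t"
proof (cases "N \<le> nat \<lceil>t\<rceil>")
  case True
  then show ?thesis unfolding Phi_def by (rule Phi_trunc_stable[OF assms])
next
  case False
  then have "nat \<lceil>t\<rceil> \<le> N" by linarith
  then show ?thesis unfolding Phi_def by (rule Phi_trunc_stable[OF le_knot_ceiling, symmetric])
qed

lemma continuous_Phi_trunc: "continuous_on UNIV (Phi_trunc N)"
  unfolding Phi_trunc_def by (intro continuous_intros)

lemma convex_Phi_trunc: "convex_on UNIV (Phi_trunc N)"
proof -
  have "convex_on UNIV (\<lambda>t. max 0 (t - a))" for a :: real
    by (intro convex_on_max convex_on_diff) (simp_all add: convex_on_const convex_on_ident concave_on_const)
  then show ?thesis
    unfolding Phi_trunc_def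
    by (intro convex_on_add convex_on_sum_fun convex_on_cmul) (simp_all add: convex_on_ident)
qed

lemma strict_mono_Phi_trunc: "strict_mono (Phi_trunc N)"
proof (rule strict_monoI)
  fix x y :: real assume "x < y"
  moreover have "(\<Sum>j<N. exp (knot j) * max 0 (x - knot j)) \<le> (\<Sum>j<N. exp (knot j) * max 0 (y - knot j))"
    using \<open>x < y\<close> by (intro sum_mono mult_left_mono) auto
  ultimately show "Phi_trunc N x < Phi_trunc N y" unfolding Phi_trunc_def by simp
qed

lemma Phi_trunc_ge: "t \<le> Phi_trunc N t"
  unfolding Phi_trunc_def by (simp add: sum_nonneg)

lemma Phi_ge: "t \<le> Phi t"
  unfolding Phi_def by (rule Phi_trunc_ge)

lemma isCont_Phi: "isCont Phi t"
proof -
  define N where "N = nat \<lceil>t + 1\<rceil>"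
  have "\<forall>\<^sub>F x in nhds t. x \<in> ball t 1" by (intro eventually_nhds_in_open) auto
  then have "\<forall>\<^sub>F x in nhds t. Phi x = Phi_trunc N x"
  proof eventually_elim
    case (elim x)
    then have "x \<le> knot N" using le_knot_ceiling[of "t + 1"] by (auto simp: N_def dist_real_def)
    then show ?case by (rule Phi_eq_Phi_trunc)
  qed
  moreover have "isCont (Phi_trunc N) t"
    using continuous_Phi_trunc by (simp add: continuous_on_eq_continuous_at)
  ultimately show ?thesis using isCont_cong by blast
qed

lemma strict_mono_Phi: "strict_mono Phi"
proof (rule strict_monoI)
  fix x y :: real assume "x < y"
  define N where "N = nat \<lceil>y\<rceil>"
  have "y \<le> knot N" unfolding N_def by (rule le_knot_ceiling)
  with \<open>x < y\<close> have "Phi x = Phi_trunc N x" "Phi y = Phi_trunc N y"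
    by (simp_all add: Phi_eq_Phi_trunc)
  with \<open>x < y\<close> show "Phi x < Phi y"
    using strict_mono_Phi_trunc[of N] by (simp add: strict_mono_less)
qed

lemma convex_Phi: "convex_on UNIV Phi"
  unfolding convex_on_def
proof (intro conjI ballI allI impI convex_UNIV)
  fix x y u v :: real assume uv: "0 \<le> u" "0 \<le> v" "u + v = 1"
  define N where "N = nat \<lceil>max x y\<rceil>"
  have xy: "max x y \<le> knot N" unfolding N_def by (rule le_knot_ceiling)
  then have x: "x \<le> knot N" and y: "y \<le> knot N" by simp_all
  have "u * x + v * y \<le> u * max x y + v * max x y"
    using uv by (intro add_mono mult_left_mono) auto
  also have "\<dots> = max x y" using uv by (simp add: distrib_right[symmetric])
  finally have z: "u *\<^sub>R x + v *\<^sub>R y \<le> knot N" using xy by (simp del: max.bounded_iff)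
  have "Phi_trunc N (u *\<^sub>R x + v *\<^sub>R y) \<le> u * Phi_trunc N x + v * Phi_trunc N y"
    using convex_Phi_trunc[of N] uv unfolding convex_on_def by blast
  then show "Phi (u *\<^sub>R x + v *\<^sub>R y) \<le> u * Phi x + v * Phi y"
    unfolding Phi_eq_Phi_trunc[OF x] Phi_eq_Phi_trunc[OF y] Phi_eq_Phi_trunc[OF z] .
qed

lemma Phi_ge_ramp:
  assumes "knot k < t"
  shows "exp (knot k) * (t - knot k) \<le> Phi t"
proof -
  define N where "N = Suc (k + nat \<lceil>t\<rceil>)"
  have "t \<le> knot N"
    using le_knot_ceiling[of t] knot_le_iff[of "nat \<lceil>t\<rceil>" N] unfolding N_def by linarith
  moreover have "exp (knot k) * max 0 (t - knot k) \<le> (\<Sum>j<N. exp (knot j) * max 0 (t - knot j))"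
    unfolding N_def by (intro member_le_sum) auto
  moreover have "0 \<le> t" using assms knot_ge[of k] by simp
  ultimately show ?thesis using assms by (simp add: Phi_eq_Phi_trunc Phi_trunc_def)
qed

lemma ln_Phi_block_lower:
  assumes t: "t \<in> {2 * knot k .. 4 * knot k}"
  shows "1 / (16 * knot k) \<le> ln (Phi t) / t\<^sup>2"
proof -
  have k2: "2 \<le> knot k" using knot_ge[of k] by simp
  have "exp (knot k) * 1 \<le> exp (knot k) * (t - knot k)" using t k2 by (intro mult_left_mono) auto
  also have "\<dots> \<le> Phi t" using t k2 by (intro Phi_ge_ramp) auto
  finally have "knot k \<le> ln (Phi t)"
    by (metis exp_gt_zero ln_exp ln_le_cancel_iff mult_1_right order_less_le_trans)
  moreover have "t\<^sup>2 \<le> (4 * knot k)\<^sup>2" using t k2 by (intro power_mono) auto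
  ultimately have "knot k / (4 * knot k)\<^sup>2 \<le> ln (Phi t) / t\<^sup>2"
    using t k2 by (intro frac_le) auto
  moreover have "knot k / (4 * knot k)\<^sup>2 = 1 / (16 * knot k)"
    using k2 by (simp add: power2_eq_square)
  ultimately show ?thesis by simp
qed

lemma disjoint_family_knot_blocks: "disjoint_family (\<lambda>k. {2 * knot k .. 4 * knot k})"
  unfolding disjoint_family_on_def
proof (intro ballI impI)
  have separated: "4 * knot j < 2 * knot k" if "j < k" for j k
    using knot_Suc_gt_double[of j] knot_le_iff[of "Suc j" k] that by linarith
  fix j k :: nat assume "j \<noteq> k"
  then consider "j < k" | "k < j" by linarith
  then show "{2 * knot j .. 4 * knot j} \<inter> {2 * knot k .. 4 * knot k} = {}"
    by cases (auto dest!: separated)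
qed

lemma nn_integral_ln_Phi_infinite:
  "(\<integral>\<^sup>+ t\<in>{1..}. ennreal (ln (Phi t) / t\<^sup>2) \<partial>lborel) = \<infinity>"
proof -
  define A where "A k = {2 * knot k .. 4 * knot k}" for k
  have disj: "disjoint_family A"
    unfolding A_def by (rule disjoint_family_knot_blocks)
  have block: "ennreal (1 / (16 * knot k)) \<le> ennreal (ln (Phi t) / t\<^sup>2) * indicator {1..} t"
    if "t \<in> A k" for k t
  proof -
    have "1 \<le> t" using that knot_ge[of k] by (simp add: A_def)
    then show ?thesis using ln_Phi_block_lower[of t k] that by (simp add: A_def ennreal_leI)
  qed
  have "\<infinity> = (\<Sum>k. ennreal (1 / 8))" by (simp add: suminf_ennreal_const_eq_top)
  also have "\<dots> = (\<Sum>k. ennreal (1 / (16 * knot k)) * emeasure lborel (A k))"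
  proof (rule suminf_cong)
    fix k
    have k2: "2 \<le> knot k" using knot_ge[of k] by simp
    have "ennreal (1 / 8) = ennreal (1 / (16 * knot k) * (4 * knot k - 2 * knot k))"
      using k2 by (simp add: field_simps)
    also have "\<dots> = ennreal (1 / (16 * knot k)) * ennreal (4 * knot k - 2 * knot k)"
      using k2 by (intro ennreal_mult) auto
    also have "ennreal (4 * knot k - 2 * knot k) = emeasure lborel (A k)"
      unfolding A_def using k2 by (intro emeasure_lborel_Icc[symmetric]) simp
    finally show "ennreal (1 / 8) = ennreal (1 / (16 * knot k)) * emeasure lborel (A k)" .
  qed
  also have "\<dots> \<le> (\<integral>\<^sup>+ t\<in>{1..}. ennreal (ln (Phi t) / t\<^sup>2) \<partial>lborel)"
    by (rule nn_integral_ge_suminf_disjoint[OF disj _ block]) (simp add: A_def)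
  finally show ?thesis by (simp add: top_unique)
qed

lemma ln_Phi_knot_le: "ln (Phi (knot (Suc k))) \<le> (knot k)\<^sup>2 + 2 * knot k"
proof -
  define T where "T = knot (Suc k)"
  have k2: "2 \<le> knot k" using knot_ge[of k] by simp
  have T_pos: "0 < T" unfolding T_def by simp
  have "Phi T = Phi_trunc (Suc k) T" unfolding T_def by (rule Phi_eq_Phi_trunc) simp
  also have "\<dots> \<le> T + (\<Sum>j<Suc k. exp (knot k) * T)"
    unfolding Phi_trunc_def
  proof (intro add_left_mono sum_mono mult_mono)
    fix j assume "j \<in> {..<Suc k}"
    then show "exp (knot j) \<le> exp (knot k)" by simp
    show "max 0 (T - knot j) \<le> T" using T_pos knot_ge[of j] by simp
  qed auto
  also have "\<dots> = T * (1 + real (Suc k) * exp (knot k))" by (simp add: algebra_simps)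
  also have "\<dots> \<le> T * (knot k * exp (knot k))"
  proof (intro mult_left_mono)
    have "1 + real (Suc k) * exp (knot k) \<le> (real k + 2) * exp (knot k)"
      using k2 by (simp add: algebra_simps)
    also have "\<dots> \<le> knot k * exp (knot k)" using knot_ge[of k] by (intro mult_right_mono) auto
    finally show "1 + real (Suc k) * exp (knot k) \<le> knot k * exp (knot k)" .
  qed (use T_pos in simp)
  finally have "ln (Phi T) \<le> ln (T * (knot k * exp (knot k)))"
    using Phi_ge[of T] T_pos by simp
  also have "\<dots> = (knot k)\<^sup>2 + ln (knot k) + knot k"
    using T_pos k2 by (simp add: ln_mult T_def)
  also have "\<dots> \<le> (knot k)\<^sup>2 + 2 * knot k" using ln_less_self[of "knot k"] k2 by linarith
  finally show ?thesis unfolding T_def .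
qed

lemma filterlim_knot_at_top: "filterlim knot at_top sequentially"
proof (rule filterlim_at_top_mono[OF filterlim_real_sequentially always_eventually], rule allI)
  fix k show "real k \<le> knot k" using knot_ge[of k] by simp
qed

lemma Liminf_ln_Phi_over_ln: "Liminf at_top (\<lambda>t. ereal (ln (Phi t) / ln t)) = 1"
proof (rule antisym)
  have "filterlim (\<lambda>k. knot (Suc k)) at_top sequentially"
    using filterlim_knot_at_top by (simp only: filterlim_sequentially_Suc)
  then have "Liminf at_top (\<lambda>t. ereal (ln (Phi t) / ln t))
      \<le> Liminf sequentially (\<lambda>k. ereal (ln (Phi (knot (Suc k))) / ln (knot (Suc k))))"
    by (rule Liminf_at_top_le_Liminf_sequence)
  also have "\<dots> \<le> Liminf sequentially (\<lambda>k. ereal (1 + 2 / knot k))"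
  proof (intro Liminf_mono always_eventually allI)
    fix k
    have k2: "2 \<le> knot k" using knot_ge[of k] by simp
    have "ln (Phi (knot (Suc k))) / (knot k)\<^sup>2 \<le> ((knot k)\<^sup>2 + 2 * knot k) / (knot k)\<^sup>2"
      using ln_Phi_knot_le[of k] k2 by (intro divide_right_mono) auto
    also have "\<dots> = 1 + 2 / knot k" using k2 by (simp add: field_simps power2_eq_square)
    finally show "ereal (ln (Phi (knot (Suc k))) / ln (knot (Suc k))) \<le> ereal (1 + 2 / knot k)"
      by simp
  qed
  also have "\<dots> = 1"
  proof (rule lim_imp_Liminf)
    have "(\<lambda>k. 2 / knot k) \<longlonglongrightarrow> 0"
      using filterlim_knot_at_top by (intro tendsto_divide_0[OF tendsto_const] filterlim_at_top_imp_at_infinity)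
    then have "(\<lambda>k. 1 + 2 / knot k) \<longlonglongrightarrow> 1 + 0" by (intro tendsto_add tendsto_const)
    then show "(\<lambda>k. ereal (1 + 2 / knot k)) \<longlonglongrightarrow> 1"
      unfolding one_ereal_def lim_ereal by simp
  qed simp
  finally show "Liminf at_top (\<lambda>t. ereal (ln (Phi t) / ln t)) \<le> 1" .
next
  have "\<forall>\<^sub>F t in at_top. 1 \<le> ereal (ln (Phi t) / ln t)"
    using eventually_gt_at_top[of "1::real"]
  proof eventually_elim
    case (elim t)
    then have "0 < ln t" "ln t \<le> ln (Phi t)" using Phi_ge[of t] by simp_all
    then show ?case by (simp add: one_ereal_def)
  qed
  then show "1 \<le> Liminf at_top (\<lambda>t. ereal (ln (Phi t) / ln t))" by (rule Liminf_bounded)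
qed

theorem lemma6p11:
  shows "\<exists>\<Phi> :: real \<Rightarrow> real.
    continuous_on {1..} \<Phi> \<and> strict_mono_on {1..} \<Phi> \<and> convex_on {1..} \<Phi> \<and>
    (\<forall>t\<ge>1. \<Phi> t \<ge> 1) \<and>
    (\<integral>\<^sup>+ t\<in>{1..}. ennreal (ln (\<Phi> t) / t\<^sup>2) \<partial>lborel) = \<infinity> \<and>
    Liminf at_top (\<lambda>t. ereal (ln (\<Phi> t) / ln t)) = 1 \<and>
    (\<forall>t\<ge>1. \<Phi> t \<ge> t)"
proof (intro exI conjI allI impI)
  show "continuous_on {1..} Phi" by (intro continuous_at_imp_continuous_on ballI isCont_Phi)
  show "strict_mono_on {1..} Phi" using strict_mono_Phi by (simp add: strict_mono_on_def strict_mono_less)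
  show "convex_on {1..} Phi" using convex_Phi by (rule convex_on_subset) auto
  show "(\<integral>\<^sup>+ t\<in>{1..}. ennreal (ln (Phi t) / t\<^sup>2) \<partial>lborel) = \<infinity>" by (rule nn_integral_ln_Phi_infinite)
  show "Liminf at_top (\<lambda>t. ereal (ln (Phi t) / ln t)) = 1" by (rule Liminf_ln_Phi_over_ln)
  fix t :: real assume "1 \<le> t"
  then show "1 \<le> Phi t" using Phi_ge[of t] by simp
  show "t \<le> Phi t" by (rule Phi_ge)
qed

end
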